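(* Let $T$ be a bounded saturation theory, let $G$ and $E$ be finite sets of predicates of $T$, and let $G' \subseteq G$. Let $N := D_T(G\cup\widetilde{E})$. For $0 \le i \le N$, let $W_S^i$ be the set $W$ of the symbolic procedure $\mathit{SDP}_T(G,E)$ after $i$ iterations of its saturation loop (step (2)), and let $W^i$ be the set $W$ of the saturation procedure run on input $G'\cup\widetilde{E}$ after $i$ iterations of its loop. Then for every $0 \le i \le N$: (1) $W^i \subseteq W_S^i$; and (2) for every predicate $g \in W_S^i$, $[\tau_{(g,i)}]_{G'} = {\tt true}$ if and only if $g \in W^i$.
   Context: A predicate is an atomic formula or its negation; a finite set of predicates is identified with the conjunction of its elements. The theory $T$ comes with inference rules; a rule instance is written $g \mathrel{:-} g_1,\dots,g_k$, meaning that $g$ (a predicate, or the contradiction symbol $\bot$) can be derived in one step from predicates $g_1,\dots,g_k$. For a set $H$ of predicates, $\widetilde{H} := \{\neg h : h \in H\}$. Saturation procedure $\mathrm{Sat}_N(H)$ (for a finite set $H$ of predicates and integer $N\ge 0$): (1) $W := H$. (2) Repeat $N$ times: set $W' := W$; for every predicate $g \notin W'$ for which there is a rule instance $g \mathrel{:-} g_1,\dots,g_k$ with all $g_j \in W'$, add $g$ to $W$. (3) If there is a rule instance $\bot \mathrel{:-} g_1,\dots,g_k$ with all $g_j\in W$, return UNSATISFIABLE, otherwise SATISFIABLE. $T$ is a bounded saturation theory if there is a function $d_T$ assigning to each finite set $H$ of predicates a natural number $d_T(H)$ such that for every $N \ge d_T(H)$, $\mathrm{Sat}_N(H)$ returns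 UNSATISFIABLE iff $H$ is unsatisfiable in $T$. For a finite set $S$, $D_T(S) := \max\{d_T(S') : S' \subseteq S\}$. Symbolic decision procedure $\mathit{SDP}_T(G,E)$: introduce a Boolean variable $b_g$ for each $g\in G$ (the set $B_G$). Let $N := D_T(G\cup\widetilde{E})$. (1) $W := G \cup \widetilde{E}$; set $\tau_{(g,0)} := b_g$ for $g\in G$ and $\tau_{(\neg e_i,0)} := {\tt true}$ for $e_i\in E$. (2) For $i = 1,\dots,N$: $W' := W$; set $S(g) := \emptyset$ for every predicate $g$; for every $g\in W'$ add $\tau_{(g,i-1)}$ to $S(g)$; for every predicate $g$ and every rule instance $g \mathrel{:-} g_1,\dots,g_k$ with all $g_m \in W'$, add the conjunction $\bigwedge_{m=1}^k \tau_{(g_m,i-1)}$ to $S(g)$ and add $g$ to $W$; then for each $g \in W$ set $\tau_{(g,i)} := \bigvee_{d\in S(g)} d$ and $\tau_{(g,\top)} := \tau_{(g,i)}$. (3) Let $S(e)$ be the set of conjunctions $\bigwedge_{m=1}^k \tau_{(g_m,\top)}$ over all rule instances $\bot \mathrel{:-} g_1,\dots,g_k$ with $\{g_1,\dots,g_k\}\subseteq W$, and set $\tau_e := \bigvee_{d\in S(e)} d$. (4) Return $\tau_e$. For a Boolean expression $\tau$ with leaves in $B_G$ (or constants) and $G'\subseteq G$, $[\tau]_{G'}$ is the truth value of $\tau$ obtained by replacing each leaf $b_g$ by ${\tt true}$ if $g\in G'$ and ${\tt false}$ otherwise, with $\wedge,\vee$ interpreted as usual. *)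

theory Defs
  imports Main "HOL-Library.FSet"
begin

text \<open>Predicates: atomic formulas (of type 'a) or their negations.\<close>
datatype 'a lit = Pos 'a | Neg 'a

fun lneg :: "'a lit \<Rightarrow> 'a lit" where
  "lneg (Pos a) = Neg a"
| "lneg (Neg a) = Pos a"

definition tilde :: "'a lit set \<Rightarrow> 'a lit set" where
  "tilde H = lneg ` H"

text \<open>Rule instances of the theory: (Some g, [g1,...,gk]) stands for g :- g1,...,gk,
  and (None, [g1,...,gk]) stands for bottom :- g1,...,gk.\<close>
type_synonym 'a rules = "('a lit option \<times> 'a lit list) set"

text \<open>One iteration of the saturation loop (identical in Sat and SDP).\<close>
definition sat_step :: "'a rules \<Rightarrow> 'a lit set \<Rightarrow> 'a lit set" where
  "sat_step R W = W \<union> {g. \<exists>b. (Some g, b) \<in> R \<and> set b \<subseteq> W}"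

definition sat_W :: "'a rules \<Rightarrow> 'a lit set \<Rightarrow> nat \<Rightarrow> 'a lit set" where
  "sat_W R H i = (sat_step R ^^ i) H"

definition sat_unsat :: "'a rules \<Rightarrow> 'a lit set \<Rightarrow> nat \<Rightarrow> bool" where
  "sat_unsat R H N = (\<exists>b. (None, b) \<in> R \<and> set b \<subseteq> sat_W R H N)"

text \<open>A theory is given by its rule instances R and its notion of unsatisfiability
  'unsat'.  It is a bounded saturation theory with bound function d.\<close>
definition bounded_saturation_theory ::
  "'a rules \<Rightarrow> ('a lit set \<Rightarrow> bool) \<Rightarrow> ('a lit set \<Rightarrow> nat) \<Rightarrow> bool" where
  "bounded_saturation_theory R unsat d =
     (\<forall>H. finite H \<longrightarrow> (\<forall>N \<ge> d H. sat_unsat R H N \<longleftrightarrow> unsat H))"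

definition D_T :: "('a lit set \<Rightarrow> nat) \<Rightarrow> 'a lit set \<Rightarrow> nat" where
  "D_T d S = Max (d ` Pow S)"

text \<open>Only finitely many rule instances have their premises in a given finite set
  (needed for the procedures to be algorithms / the disjunctions to be finite).\<close>
definition rules_locally_finite :: "'a rules \<Rightarrow> bool" where
  "rules_locally_finite R = (\<forall>W. finite W \<longrightarrow> finite {r \<in> R. set (snd r) \<subseteq> W})"

datatype 'v bexp = BVar 'v | BConst bool | BAnd "'v bexp list" | BOr "'v bexp fset"

primrec eval_bexp :: "'v set \<Rightarrow> 'v bexp \<Rightarrow> bool" where
  "eval_bexp G' (BVar g) = (g \<in> G')"
| "eval_bexp G' (BConst c) = c"
| "eval_bexp G' (BAnd xs) = list_all id (map (eval_bexp G') xs)"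
| "eval_bexp G' (BOr S) = (True |\<in>| fimage (eval_bexp G') S)"

text \<open>tau_(g,i) of SDP_T(G,E). In step (1) the assignment tau_(neg e,0) := true is
  performed after tau_(g,0) := b_g, so it takes precedence. Values for g outside W
  are irrelevant (set to false).\<close>
primrec sdp_tau :: "'a rules \<Rightarrow> 'a lit set \<Rightarrow> 'a lit set \<Rightarrow> nat \<Rightarrow> 'a lit \<Rightarrow> 'a lit bexp" where
  "sdp_tau R G E 0 g =
     (if g \<in> tilde E then BConst True else if g \<in> G then BVar g else BConst False)"
| "sdp_tau R G E (Suc i) g =
     (let W' = sat_W R (G \<union> tilde E) i in
      if g \<in> sat_step R W' then
        BOr (Abs_fset ({sdp_tau R G E i g | h. h = g \<and> g \<in> W'} \<union>
                       {BAnd (map (sdp_tau R G E i) b) | b. (Some g, b) \<in> R \<and> set b \<subseteq> W'}))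
      else BConst False)"

end

theory Submission
  imports Defs
begin

text \<open>Since \<open>G' \<subseteq> G\<close>, the concrete run is dominated by the symbolic one,
  \<open>W\<^sup>i \<subseteq> W\<^sub>S\<^sup>i\<close>. Evaluated under \<open>G'\<close>, the disjuncts of \<open>\<tau>(g, i+1)\<close> are \<open>\<tau>(g, i)\<close> and the
  conjunctions of \<open>\<tau>(h, i)\<close> over the premises \<open>h\<close> of the rules for \<open>g\<close> that fire on \<open>W\<^sub>S\<^sup>i\<close>. By the
  induction hypothesis they say "\<open>g \<in> W\<^sup>i\<close>" and "some rule for \<open>g\<close> fires on \<open>W\<^sup>i\<close>" (no such rule is
  missed, as \<open>W\<^sup>i \<subseteq> W\<^sub>S\<^sup>i\<close>), which together mean \<open>g \<in> W\<^sup>i\<^sup>+\<^sup>1\<close>.\<close>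

lemma sat_W_0 [simp]: "sat_W R H 0 = H"
  by (simp add: sat_W_def)

lemma sat_W_Suc [simp]: "sat_W R H (Suc i) = sat_step R (sat_W R H i)"
  by (simp add: sat_W_def)

lemma sat_step_mono: "W \<subseteq> V \<Longrightarrow> sat_step R W \<subseteq> sat_step R V"
  unfolding sat_step_def by blast

lemma sat_W_mono: "H \<subseteq> K \<Longrightarrow> sat_W R H i \<subseteq> sat_W R K i"
  by (induction i) (simp_all add: sat_step_mono)

lemma finite_rules_firing_on:
  assumes "rules_locally_finite R" "finite W"
  shows "finite {r \<in> R. set (snd r) \<subseteq> W}"
  using assms unfolding rules_locally_finite_def by blast

lemma finite_rule_bodies:
  assumes "rules_locally_finite R" "finite W"
  shows "finite {b. (Some g, b) \<in> R \<and> set b \<subseteq> W}"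
proof -
  have "{b. (Some g, b) \<in> R \<and> set b \<subseteq> W} \<subseteq> snd ` {r \<in> R. set (snd r) \<subseteq> W}"
    by force
  then show ?thesis
    by (rule finite_surj[OF finite_rules_firing_on[OF assms]])
qed

lemma finite_sat_step:
  assumes "rules_locally_finite R" "finite W"
  shows "finite (sat_step R W)"
proof -
  have "{g. \<exists>b. (Some g, b) \<in> R \<and> set b \<subseteq> W} \<subseteq> (the \<circ> fst) ` {r \<in> R. set (snd r) \<subseteq> W}"
    by force
  then have "finite {g. \<exists>b. (Some g, b) \<in> R \<and> set b \<subseteq> W}"
    by (rule finite_surj[OF finite_rules_firing_on[OF assms]])
  then show ?thesis
    using assms(2) by (simp add: sat_step_def)
qed

lemma finite_sat_W:
  assumes "rules_locally_finite R" "finite H"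
  shows "finite (sat_W R H i)"
  by (induction i) (simp_all add: finite_sat_step assms)

lemma eval_bexp_BOr_Abs_fset:
  "finite S \<Longrightarrow> eval_bexp G' (BOr (Abs_fset S)) \<longleftrightarrow> (\<exists>x\<in>S. eval_bexp G' x)"
  by (simp add: Abs_fset_inverse fimage.rep_eq)

lemma eval_sdp_tau_Suc:
  assumes "rules_locally_finite R" "finite G" "finite E"
    and "g \<in> sat_W R (G \<union> tilde E) (Suc i)"
  shows "eval_bexp G' (sdp_tau R G E (Suc i) g) \<longleftrightarrow>
           (g \<in> sat_W R (G \<union> tilde E) i \<and> eval_bexp G' (sdp_tau R G E i g)) \<or>
           (\<exists>b. (Some g, b) \<in> R \<and> set b \<subseteq> sat_W R (G \<union> tilde E) i \<and>
                (\<forall>h\<in>set b. eval_bexp G' (sdp_tau R G E i h)))"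
proof -
  let ?W = "sat_W R (G \<union> tilde E) i"
  define S where "S = {sdp_tau R G E i g | h. h = g \<and> g \<in> ?W} \<union>
                      {BAnd (map (sdp_tau R G E i) b) | b. (Some g, b) \<in> R \<and> set b \<subseteq> ?W}"
  have and_eval: "eval_bexp G' (BAnd (map (sdp_tau R G E i) b)) \<longleftrightarrow>
                     (\<forall>h\<in>set b. eval_bexp G' (sdp_tau R G E i h))" for b
    by (simp add: list_all_iff)
  have "finite ?W"
    using assms(1-3) by (simp add: finite_sat_W tilde_def)
  then have "finite S" \<comment> \<open>\<open>Abs_fset\<close> yields junk on infinite sets\<close>
    using assms(1) by (simp add: S_def finite_image_set finite_rule_bodies)
  moreover have "sdp_tau R G E (Suc i) g = BOr (Abs_fset S)"
    using assms(4) by (simp add: S_def Let_def)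
  ultimately have "eval_bexp G' (sdp_tau R G E (Suc i) g) \<longleftrightarrow> (\<exists>x\<in>S. eval_bexp G' x)"
    by (simp only: eval_bexp_BOr_Abs_fset)
  also have "\<dots> \<longleftrightarrow> (g \<in> ?W \<and> eval_bexp G' (sdp_tau R G E i g)) \<or>
           (\<exists>b. (Some g, b) \<in> R \<and> set b \<subseteq> ?W \<and> (\<forall>h\<in>set b. eval_bexp G' (sdp_tau R G E i h)))"
    unfolding S_def by (auto simp: list_all_iff) (use and_eval in blast)
  finally show ?thesis .
qed

lemma eval_sdp_tau_iff_mem_sat_W:
  assumes "rules_locally_finite R" "finite G" "finite E" "G' \<subseteq> G"
    and "g \<in> sat_W R (G \<union> tilde E) i"
  shows "eval_bexp G' (sdp_tau R G E i g) \<longleftrightarrow> g \<in> sat_W R (G' \<union> tilde E) i"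
  using assms(5)
proof (induction i arbitrary: g)
  case 0
  then show ?case
    using assms(4) by auto
next
  case (Suc i)
  let ?WS = "sat_W R (G \<union> tilde E) i" and ?W = "sat_W R (G' \<union> tilde E) i"
  have dominated: "?W \<subseteq> ?WS"
    using assms(4) by (intro sat_W_mono) blast
  have "eval_bexp G' (sdp_tau R G E (Suc i) g) \<longleftrightarrow>
          (g \<in> ?WS \<and> eval_bexp G' (sdp_tau R G E i g)) \<or>
          (\<exists>b. (Some g, b) \<in> R \<and> set b \<subseteq> ?WS \<and> (\<forall>h\<in>set b. eval_bexp G' (sdp_tau R G E i h)))"
    using eval_sdp_tau_Suc[OF assms(1-3) Suc.prems] .
  also have "\<dots> \<longleftrightarrow> g \<in> ?W \<or> (\<exists>b. (Some g, b) \<in> R \<and> set b \<subseteq> ?W)"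
    using Suc.IH dominated by blast
  also have "\<dots> \<longleftrightarrow> g \<in> sat_W R (G' \<union> tilde E) (Suc i)"
    by (simp add: sat_step_def)
  finally show ?case .
qed

theorem lemma3p4:
  fixes R :: "'a rules" and unsat :: "'a lit set \<Rightarrow> bool" and d :: "'a lit set \<Rightarrow> nat"
    and G E G' :: "'a lit set" and i :: nat
  assumes "bounded_saturation_theory R unsat d"
    and "rules_locally_finite R"
    and "finite G" and "finite E" and "G' \<subseteq> G"
    and "i \<le> D_T d (G \<union> tilde E)"
  shows "sat_W R (G' \<union> tilde E) i \<subseteq> sat_W R (G \<union> tilde E) i \<and>
         (\<forall>g \<in> sat_W R (G \<union> tilde E) i.
            eval_bexp G' (sdp_tau R G E i g) \<longleftrightarrow> g \<in> sat_W R (G' \<union> tilde E) i)"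
proof
  show "sat_W R (G' \<union> tilde E) i \<subseteq> sat_W R (G \<union> tilde E) i"
    using assms(5) by (intro sat_W_mono) blast
  show "\<forall>g \<in> sat_W R (G \<union> tilde E) i.
          eval_bexp G' (sdp_tau R G E i g) \<longleftrightarrow> g \<in> sat_W R (G' \<union> tilde E) i"
    using eval_sdp_tau_iff_mem_sat_W[OF assms(2-5)] by blast
qed

end
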